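(* Let $(\alpha_1,\alpha_2)$ be a good pair with canonical representation $(x,y,z)$. Then $x\ge\frac{1+2\sqrt7}{9}=1-2\tau$.
   Context: $\tau=\frac{4-\sqrt7}{9}$. A pair $(\alpha_1,\alpha_2)\in[0,1]^2$ is a good pair if $\max\{\frac14,\frac{\alpha_1+\sqrt{2\alpha_1-1}}{2}\}\le\alpha_2$ and $\max\{\alpha_2,1-\alpha_2,\frac{1+\tau^2}{2}\}\le\alpha_1$, and in addition the unique $(x,y,z)\in[0,1]^3$ with $x+y+z=1$, $x\ge\frac12$, $\alpha_1=x^2+y^2$, $\alpha_2=x^2+z^2$ satisfies $2x^2+z^2\ge1$; this $(x,y,z)$ is the canonical representation. *)

theory Defs
  imports Complex_Main
begin

definition tau :: real where
  "tau = (4 - sqrt 7) / 9"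

definition is_rep :: "real \<Rightarrow> real \<Rightarrow> real \<times> real \<times> real \<Rightarrow> bool" where
  "is_rep a1 a2 t = (case t of (x, y, z) \<Rightarrow>
      x \<in> {0..1} \<and> y \<in> {0..1} \<and> z \<in> {0..1} \<and> x + y + z = 1 \<and> x \<ge> 1/2 \<and>
      a1 = x^2 + y^2 \<and> a2 = x^2 + z^2)"

definition canonical_rep :: "real \<Rightarrow> real \<Rightarrow> real \<times> real \<times> real" where
  "canonical_rep a1 a2 = (THE t. is_rep a1 a2 t)"

definition good_pair :: "real \<Rightarrow> real \<Rightarrow> bool" where
  "good_pair a1 a2 \<longleftrightarrow>
     a1 \<in> {0..1} \<and> a2 \<in> {0..1} \<and>
     max (1/4) ((a1 + sqrt (2*a1 - 1)) / 2) \<le> a2 \<and>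
     max (max a2 (1 - a2)) ((1 + tau^2) / 2) \<le> a1 \<and>
     (\<exists>!t. is_rep a1 a2 t) \<and>
     (case canonical_rep a1 a2 of (x, y, z) \<Rightarrow> 2*x^2 + z^2 \<ge> 1)"

end

theory Submission
  imports Defs
begin

text \<open>The number \<open>\<tau>\<close> is the root of \<open>2(1-2t)\<^sup>2 + t\<^sup>2 = 1\<close>, so the lower bound
  \<open>a\<^sub>1 \<ge> (1+\<tau>\<^sup>2)/2\<close> reads \<open>x\<^sup>2+y\<^sup>2 \<ge> (1-2\<tau>)\<^sup>2+\<tau>\<^sup>2\<close>. If \<open>x < 1-2\<tau>\<close>, the condition
  \<open>2x\<^sup>2+z\<^sup>2 \<ge> 1\<close> forces \<open>z > \<tau>\<close>, hence \<open>y < 1-x-\<tau>\<close>; but on \<open>1/2 \<le> x \<le> 1-2\<tau>\<close> the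
  convex function \<open>x\<^sup>2 + (1-x-\<tau>)\<^sup>2\<close> never exceeds its value \<open>(1-2\<tau>)\<^sup>2+\<tau>\<^sup>2\<close> at the right
  endpoint, a contradiction.\<close>

lemma first_coordinate_lower_bound:
  fixes x y z t :: real
  assumes sum: "x + y + z = 1" and "0 \<le> y" "0 \<le> z" "1/2 \<le> x" "t \<le> 1/2"
    and xz: "2 * (1 - 2*t)^2 + t^2 \<le> 2 * x^2 + z^2"
    and xy: "(1 - 2*t)^2 + t^2 \<le> x^2 + y^2"
  shows "1 - 2*t \<le> x"
proof (rule ccontr)
  assume "\<not> 1 - 2*t \<le> x"
  hence x_lt: "x < 1 - 2*t" by simp
  have "x^2 < (1 - 2*t)^2"
    using x_lt \<open>1/2 \<le> x\<close> by (intro power_strict_mono) auto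
  hence "t^2 < z^2" using xz by linarith
  hence "t < z" using \<open>0 \<le> z\<close> by (rule power2_less_imp_less)
  hence "y^2 < (1 - x - t)^2"
    using sum \<open>0 \<le> y\<close> by (intro power_strict_mono) auto
  moreover have "(1 - 2*t)^2 + t^2 - (x^2 + (1 - x - t)^2) = 2 * (1 - 2*t - x) * (x - t)"
    by (simp add: power2_eq_square algebra_simps)
  moreover have "0 \<le> 2 * (1 - 2*t - x) * (x - t)"
    using x_lt \<open>1/2 \<le> x\<close> \<open>t \<le> 1/2\<close> by simp
  ultimately show False using xy by linarith
qed

lemma tau_equation: "2 * (1 - 2*tau)^2 + tau^2 = 1"
  unfolding tau_def by (simp add: power2_eq_square field_simps)

lemma tau_le_half: "tau \<le> 1/2"
proof -
  have "0 \<le> sqrt 7" by simp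
  thus ?thesis unfolding tau_def by (simp add: field_simps)
qed

lemma one_minus_two_tau: "(1 + 2 * sqrt 7) / 9 = 1 - 2 * tau"
  unfolding tau_def by (simp add: field_simps)

lemma good_pair_canonical_rep:
  assumes "good_pair a1 a2"
  shows "is_rep a1 a2 (canonical_rep a1 a2)"
  using assms unfolding good_pair_def canonical_rep_def by (blast intro: theI')

theorem mainTheorem8:
  fixes a1 a2 x y z :: real
  assumes "good_pair a1 a2"
    and "canonical_rep a1 a2 = (x, y, z)"
  shows "x \<ge> (1 + 2 * sqrt 7) / 9 \<and> (1 + 2 * sqrt 7) / 9 = 1 - 2 * tau"
proof -
  have xz: "1 \<le> 2 * x^2 + z^2" and a1: "(1 + tau^2) / 2 \<le> a1"
    using assms unfolding good_pair_def by auto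
  have "is_rep a1 a2 (x, y, z)"
    using good_pair_canonical_rep[OF assms(1)] assms(2) by simp
  hence rep: "x + y + z = 1" "0 \<le> y" "0 \<le> z" "1/2 \<le> x" "a1 = x^2 + y^2"
    unfolding is_rep_def by auto
  have "1 - 2 * tau \<le> x"
  proof (rule first_coordinate_lower_bound[OF rep(1-4) tau_le_half])
    show "2 * (1 - 2*tau)^2 + tau^2 \<le> 2 * x^2 + z^2"
      using xz tau_equation by simp
    show "(1 - 2*tau)^2 + tau^2 \<le> x^2 + y^2"
      using a1 rep(5) tau_equation by simp
  qed
  thus ?thesis using one_minus_two_tau by simp
qed

end
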